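(* Let $T$ and $A$ be closed Hermitian subspaces in $X^2$ and $S$ a self-adjoint subspace in $X^2$, with $D(T)=D(S)=:D\subset D(A)$ and $T=S+A$, and assume $\rho(T)\cap\rho(S)\neq\emptyset$. Let $Q:A(0)^\perp\to S(0)^\perp$ be the orthogonal projection (note $S(0)^\perp\subset A(0)^\perp$ under these hypotheses). (i) If $QA_s$ is $S_s$-compact, then $T$ is a compact perturbation of $S$. (ii) If $T$ is a compact perturbation of $S$ and $T_s$ is a bounded operator on $D$, then $QA_s$ is $S_s$-compact.
   Context: $X$ is a complex Hilbert space and $X^2=X\times X$ carries the inner product $\langle (x,f),(y,g)\rangle=\langle x,y\rangle+\langle f,g\rangle$. A subspace $T$ in $X^2$ means a linear subspace of $X^2$ (a linear relation); a linear operator in $X$ is identified with its graph. Notation: $D(T)=\{x:(x,f)\in T \text{ for some } f\}$, $T(x)=\{f:(x,f)\in T\}$, $T^{-1}=\{(f,x):(x,f)\in T\}$, $\lambda I$ is the graph of $x\mapsto \lambda x$. The adjoint is $T^*=\{(y,g)\in X^2:\langle g,x\rangle=\langle y,f\rangle \text{ for all }(x,f)\in T\}$; $T$ is Hermitian if $T\subset T^*$ and self-adjoint if $T=T^*$. For subspaces $S,A$ in $X^2$, $S+A=\{(x,f+g):(x,f)\in S,(x,g)\in A\}$. For a closed subspace $T$, set $T_\infty=\{(0,g)\in X^2:(0,g)\in T\}$ and $T_s=T\ominus T_\infty$ (orthogonal complement of $T_\infty$ in $T$), so $T=T_s\oplus T_\infty$; $T_s$ is the graph of a linear operator (the operator part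 of $T$) with $D(T_s)=D(T)$ and $R(T_s)\subset T(0)^\perp$. Resolvent set: $\rho(T)=\{\lambda\in\mathbb C:(\lambda I-T)^{-1}$ is a bounded linear operator defined on all of $X\}$. For linear operators $U,V$ in $X$ with $D(V)\subset D(U)$: $U$ is $V$-compact if $U|_{D(V)}$ is compact as a map from $(D(V),\|\cdot\|_V)$ into $X$, where $\|x\|_V=\|x\|+\|Vx\|$. Compact perturbation: for closed subspaces $T,S$ in $X^2$ with orthogonal projections $P_T,P_S$ of $X^2$ onto $T$, $S$, $T$ is a compact perturbation of $S$ if $P_T-P_S$ is a compact operator. *)

theory Defs
  imports "HOL-Analysis.Analysis"
begin

text \<open>HOL-Analysis only provides real inner product spaces, so we introduce complex
vector spaces, complex inner product spaces and complex Hilbert spaces as type classes.\<close>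

class complex_vector = real_vector +
  fixes scaleC :: "complex \<Rightarrow> 'a \<Rightarrow> 'a"
  assumes scaleC_add_right: "scaleC a (x + y) = scaleC a x + scaleC a y"
    and scaleC_add_left: "scaleC (a + b) x = scaleC a x + scaleC b x"
    and scaleC_scaleC: "scaleC a (scaleC b x) = scaleC (a * b) x"
    and scaleC_one: "scaleC 1 x = x"
    and scaleR_scaleC: "scaleR r x = scaleC (complex_of_real r) x"

class complex_inner = complex_vector + real_normed_vector +
  fixes cinner :: "'a \<Rightarrow> 'a \<Rightarrow> complex"
  assumes cinner_commute: "cinner x y = cnj (cinner y x)"
    and cinner_add_left: "cinner (x + y) z = cinner x z + cinner y z"
    and cinner_scaleC_left: "cinner (scaleC r x) y = r * cinner x y"
    and cinner_self_real: "Im (cinner x x) = 0"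
    and cinner_self_nonneg: "0 \<le> Re (cinner x x)"
    and cinner_eq_zero_iff: "cinner x x = 0 \<longleftrightarrow> x = 0"
    and norm_eq_sqrt_cinner: "norm x = sqrt (Re (cinner x x))"

class chilbert_space = complex_inner + complete_space

definition rel_subspace :: "('a::complex_vector \<times> 'a) set \<Rightarrow> bool" where
  "rel_subspace T \<longleftrightarrow> (0,0) \<in> T \<and> (\<forall>p\<in>T. \<forall>q\<in>T. (fst p + fst q, snd p + snd q) \<in> T)
     \<and> (\<forall>c. \<forall>p\<in>T. (scaleC c (fst p), scaleC c (snd p)) \<in> T)"

definition pinner :: "('a::complex_inner \<times> 'a) \<Rightarrow> ('a \<times> 'a) \<Rightarrow> complex" where
  "pinner p q = cinner (fst p) (fst q) + cinner (snd p) (snd q)"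

definition Dom :: "('a \<times> 'a) set \<Rightarrow> 'a set" where
  "Dom T = {x. \<exists>f. (x, f) \<in> T}"

definition relapp :: "('a \<times> 'a) set \<Rightarrow> 'a \<Rightarrow> 'a set" where
  "relapp T x = {f. (x, f) \<in> T}"

definition relinv :: "('a \<times> 'a) set \<Rightarrow> ('a \<times> 'a) set" where
  "relinv T = {(f, x). (x, f) \<in> T}"

definition graph :: "('a \<Rightarrow> 'a) \<Rightarrow> ('a \<times> 'a) set" where
  "graph B = {(x, B x) | x. True}"

definition scal_id :: "complex \<Rightarrow> ('a::complex_vector \<times> 'a) set" where
  "scal_id c = {(x, scaleC c x) | x. True}"

definition relsum :: "('a::ab_group_add \<times> 'a) set \<Rightarrow> ('a \<times> 'a) set \<Rightarrow> ('a \<times> 'a) set" where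
  "relsum S A = {(x, f + g) | x f g. (x, f) \<in> S \<and> (x, g) \<in> A}"

definition relneg :: "('a::ab_group_add \<times> 'a) set \<Rightarrow> ('a \<times> 'a) set" where
  "relneg T = {(x, - f) | x f. (x, f) \<in> T}"

definition adj :: "('a::complex_inner \<times> 'a) set \<Rightarrow> ('a \<times> 'a) set" where
  "adj T = {(y, g). \<forall>(x, f) \<in> T. cinner g x = cinner y f}"

definition hermitian :: "('a::complex_inner \<times> 'a) set \<Rightarrow> bool" where
  "hermitian T \<longleftrightarrow> rel_subspace T \<and> T \<subseteq> adj T"

definition self_adjoint :: "('a::complex_inner \<times> 'a) set \<Rightarrow> bool" where
  "self_adjoint T \<longleftrightarrow> rel_subspace T \<and> T = adj T"

definition mul_part :: "('a::zero \<times> 'a) set \<Rightarrow> ('a \<times> 'a) set" where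
  "mul_part T = {(0, g) | g. (0, g) \<in> T}"

definition op_part :: "('a::complex_inner \<times> 'a) set \<Rightarrow> ('a \<times> 'a) set" where
  "op_part T = {p \<in> T. \<forall>q \<in> mul_part T. pinner p q = 0}"

text \<open>The operator whose graph is \<open>T\<^sub>s\<close> (meaningful on \<open>D(T)\<close>).\<close>
definition op_fun :: "('a::complex_inner \<times> 'a) set \<Rightarrow> 'a \<Rightarrow> 'a" where
  "op_fun T x = (THE f. (x, f) \<in> op_part T)"

definition clinear_map :: "('a::complex_vector \<Rightarrow> 'a) \<Rightarrow> bool" where
  "clinear_map B \<longleftrightarrow> (\<forall>x y. B (x + y) = B x + B y) \<and> (\<forall>c x. B (scaleC c x) = scaleC c (B x))"

definition bounded_everywhere_op :: "('a::complex_inner \<times> 'a) set \<Rightarrow> bool" where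
  "bounded_everywhere_op R \<longleftrightarrow>
     (\<exists>B. clinear_map B \<and> (\<exists>K. \<forall>x. norm (B x) \<le> K * norm x) \<and> R = graph B)"

definition resolvent_set :: "('a::complex_inner \<times> 'a) set \<Rightarrow> complex set" where
  "resolvent_set T = {c. bounded_everywhere_op (relinv (relsum (scal_id c) (relneg T)))}"

definition ortho :: "'a::complex_inner set \<Rightarrow> 'a set" where
  "ortho M = {x. \<forall>y\<in>M. cinner x y = 0}"

definition proj :: "'a::complex_inner set \<Rightarrow> 'a \<Rightarrow> 'a" where
  "proj M x = (THE y. y \<in> M \<and> (\<forall>z\<in>M. cinner (x - y) z = 0))"

definition proj2 :: "('a::complex_inner \<times> 'a) set \<Rightarrow> ('a \<times> 'a) \<Rightarrow> ('a \<times> 'a)" where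
  "proj2 M p = (THE q. q \<in> M \<and> (\<forall>z\<in>M. pinner (p - q) z = 0))"

definition compact_operator :: "('a::real_normed_vector \<Rightarrow> 'b::real_normed_vector) \<Rightarrow> bool" where
  "compact_operator K \<longleftrightarrow> (\<forall>B. bounded B \<longrightarrow> compact (closure (K ` B)))"

definition compact_perturbation :: "('a::complex_inner \<times> 'a) set \<Rightarrow> ('a \<times> 'a) set \<Rightarrow> bool" where
  "compact_perturbation T S \<longleftrightarrow> compact_operator (\<lambda>p. proj2 T p - proj2 S p)"

definition rel_compact :: "('a::real_normed_vector \<Rightarrow> 'a) \<Rightarrow> ('a \<Rightarrow> 'a) \<Rightarrow> 'a set \<Rightarrow> bool" where
  "rel_compact U V D \<longleftrightarrow>
     (\<forall>B \<subseteq> D. (\<exists>K. \<forall>x\<in>B. norm x + norm (V x) \<le> K) \<longrightarrow> compact (closure (U ` B)))"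

end

theory Submission
  imports Defs
begin

text \<open>
  The key observation is that \<open>T\<close> and \<open>S\<close> differ exactly by \<open>Q A\<^sub>s\<close>: \<open>(x, f) \<in> S\<close> iff
  \<open>(x, f + Q A\<^sub>s x) \<in> T\<close>, and \<open>T(0) = S(0)\<close>. Hence for \<open>p = (x, f) \<in> S\<close> one has
  \<open>(P\<^sub>T - P\<^sub>S) p = (0, Q A\<^sub>s x) - P\<^sub>T (0, Q A\<^sub>s x)\<close>, and symmetrically on \<open>T\<close>.

  (ii) Applying \<open>P\<^sub>T - P\<^sub>S\<close> to \<open>(x, S\<^sub>s x)\<close> with \<open>x\<close> bounded in the graph norm gives a
  convergent subsequence of \<open>P\<^sub>T (0, Q A\<^sub>s x) = (y, g)\<close>; along it
  \<open>Q A\<^sub>s x = T\<^sub>s y + (h - P h)\<close> converges, where \<open>h = Q A\<^sub>s x - g\<close>, \<open>P\<close> projects onto \<open>S(0)\<close>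
  and \<open>T\<^sub>s\<close> is bounded.

  (i) Write \<open>P\<^sub>T - P\<^sub>S = (I - P\<^sub>S) P\<^sub>T - P\<^sub>S (I - P\<^sub>T)\<close>. The second operator is the adjoint of
  \<open>(I - P\<^sub>T) P\<^sub>S\<close>, which is compact because \<open>P\<^sub>S\<close> maps bounded sets to graph-norm bounded
  ones. For \<open>(I - P\<^sub>S) P\<^sub>T\<close> one needs compactness of \<open>Q A\<^sub>s\<close> on bounded subsets of \<open>T\<close>: with
  \<open>\<lambda> \<in> \<rho>(T) \<inter> \<rho>(S)\<close> the operator \<open>V = Q A\<^sub>s (\<lambda> - S)\<^sup>-\<^sup>1\<close> is compact, \<open>w = Q A\<^sub>s x\<close> solves
  \<open>w = V a + V w\<close> with \<open>a = \<lambda> x - f\<close> bounded, and \<open>1\<close> is not an eigenvalue of \<open>V\<close> since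
  \<open>\<lambda> - T\<close> is injective; a Riesz-type argument then yields a convergent subsequence of \<open>w\<close>.
\<close>

section \<open>Complex inner product spaces\<close>

lemma Re_cinner_self: "Re (cinner x x) = (norm x)\<^sup>2"
  using norm_eq_sqrt_cinner[of x] cinner_self_nonneg[of x] by simp

lemma cinner_self: "cinner x x = complex_of_real ((norm x)\<^sup>2)"
  using Re_cinner_self[of x] cinner_self_real[of x] by (simp add: complex_eq_iff)

lemma cinner_zero_left [simp]: "cinner 0 y = 0"
  using cinner_add_left[of 0 0 y] by simp

lemma cinner_zero_right [simp]: "cinner x 0 = 0"
  using cinner_commute[of x 0] by simp

lemma cinner_minus_left: "cinner (- x) y = - cinner x y"
  using cinner_add_left[of x "- x" y] by (metis add.inverse_unique right_minus cinner_zero_left)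

lemma cinner_diff_left: "cinner (x - y) z = cinner x z - cinner y z"
  using cinner_add_left[of x "- y" z] by (simp add: cinner_minus_left)

lemma cinner_add_right: "cinner x (y + z) = cinner x y + cinner x z"
  by (metis cinner_add_left cinner_commute complex_cnj_add)

lemma cinner_minus_right: "cinner x (- y) = - cinner x y"
  by (metis cinner_commute cinner_minus_left complex_cnj_minus)

lemma cinner_diff_right: "cinner x (y - z) = cinner x y - cinner x z"
  using cinner_add_right[of x y "- z"] by (simp add: cinner_minus_right)

lemma cinner_scaleC_right: "cinner x (scaleC c y) = cnj c * cinner x y"
  by (metis cinner_commute cinner_scaleC_left complex_cnj_mult)

lemma cinner_scaleR_left: "cinner (r *\<^sub>R x) y = complex_of_real r * cinner x y"
  by (simp add: scaleR_scaleC cinner_scaleC_left)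

lemma cinner_scaleR_right: "cinner x (r *\<^sub>R y) = complex_of_real r * cinner x y"
  by (simp add: scaleR_scaleC cinner_scaleC_right)

lemma scaleC_zero_right [simp]: "scaleC c 0 = 0"
  using scaleC_add_right[of c 0 0] by simp

lemma norm_add_square: "(norm (x + y))\<^sup>2 = (norm x)\<^sup>2 + (norm y)\<^sup>2 + 2 * Re (cinner x y)"
proof -
  have "Re (cinner y x) = Re (cinner x y)"
    by (subst cinner_commute) simp
  then show ?thesis
    by (simp flip: Re_cinner_self add: cinner_add_left cinner_add_right)
qed

lemma norm_diff_square: "(norm (x - y))\<^sup>2 = (norm x)\<^sup>2 + (norm y)\<^sup>2 - 2 * Re (cinner x y)"
  using norm_add_square[of x "- y"] by (simp add: cinner_minus_right)

lemma norm_scaleC: "norm (scaleC c (x::'a::complex_inner)) = cmod c * norm x"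
proof -
  have "complex_of_real ((norm (scaleC c x))\<^sup>2) = cinner (scaleC c x) (scaleC c x)"
    by (rule cinner_self[symmetric])
  also have "\<dots> = (c * cnj c) * cinner x x"
    by (simp add: cinner_scaleC_left cinner_scaleC_right mult.assoc)
  also have "\<dots> = complex_of_real ((cmod c * norm x)\<^sup>2)"
    by (simp only: complex_norm_square[symmetric] cinner_self of_real_mult[symmetric] power_mult_distrib)
  finally show ?thesis
    by (simp only: of_real_eq_iff power2_eq_iff_nonneg norm_ge_zero mult_nonneg_nonneg)
qed

lemma norm_cinner_le: "cmod (cinner x y) \<le> norm x * norm y"
proof (cases "y = 0")
  case True
  then show ?thesis
    by simp
next
  case False
  define w where "w = cinner x y"
  define n where "n = (norm y)\<^sup>2"
  have n: "n > 0"
    using False by (simp add: n_def)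
  \<comment> \<open>expand \<open>0 \<le> \<parallel>x - t y\<parallel>\<^sup>2\<close> at the minimising \<open>t\<close>\<close>
  define t where "t = w / complex_of_real n"
  define q where "q = w * cnj w / complex_of_real n"
  have "cinner (x - scaleC t y) (x - scaleC t y)
      = cinner x x - cnj t * w - t * cnj w + t * cnj t * cinner y y"
    by (simp add: w_def cinner_diff_left cinner_diff_right cinner_scaleC_left cinner_scaleC_right
        cinner_commute[of y x] algebra_simps)
  also have "\<dots> = cinner x x - q"
    using n by (simp add: q_def t_def cinner_self flip: n_def)
  also have "q = complex_of_real ((cmod w)\<^sup>2 / n)"
    by (simp add: q_def flip: complex_norm_square)
  finally have expand: "cinner (x - scaleC t y) (x - scaleC t y)
      = cinner x x - complex_of_real ((cmod w)\<^sup>2 / n)" .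
  have "0 \<le> Re (cinner (x - scaleC t y) (x - scaleC t y))"
    by (simp add: Re_cinner_self)
  then have "(cmod w)\<^sup>2 / n \<le> (norm x)\<^sup>2"
    by (simp add: expand Re_cinner_self)
  then have "(cmod w)\<^sup>2 \<le> (norm x)\<^sup>2 * n"
    using n by (simp add: pos_divide_le_eq)
  also have "\<dots> = (norm x * norm y)\<^sup>2"
    by (simp add: n_def power_mult_distrib)
  finally have "(cmod w)\<^sup>2 \<le> (norm x * norm y)\<^sup>2" .
  then show ?thesis
    unfolding w_def by (rule power2_le_imp_le) simp
qed

lemma bounded_bilinear_cinner: "bounded_bilinear cinner"
proof
  fix a a' b b' :: 'a and r :: real
  show "cinner (a + a') b = cinner a b + cinner a' b"
    by (rule cinner_add_left)
  show "cinner a (b + b') = cinner a b + cinner a b'"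
    by (rule cinner_add_right)
  show "cinner (r *\<^sub>R a) b = r *\<^sub>R cinner a b"
    by (simp add: cinner_scaleR_left scaleR_conv_of_real)
  show "cinner a (r *\<^sub>R b) = r *\<^sub>R cinner a b"
    by (simp add: cinner_scaleR_right scaleR_conv_of_real)
  show "\<exists>K. \<forall>a b. norm (cinner a b) \<le> norm a * norm b * K"
    by (intro exI[of _ 1]) (simp add: norm_cinner_le)
qed

text \<open>\<open>X\<^sup>2\<close> with \<open>pinner\<close> is itself a complex Hilbert space, so the projections \<open>proj2\<close> onto
  subspaces of \<open>X\<^sup>2\<close> are instances of \<open>proj\<close> (see \<open>proj2_eq_proj\<close>).\<close>

instantiation prod :: (complex_vector, complex_vector) complex_vector
begin

definition scaleC_prod_def: "scaleC c p = (scaleC c (fst p), scaleC c (snd p))"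

instance
  by standard (simp_all add: scaleC_prod_def scaleC_add_right scaleC_add_left scaleC_scaleC
      scaleC_one scaleR_scaleC scaleR_prod_def)

end

instantiation prod :: (complex_inner, complex_inner) complex_inner
begin

definition cinner_prod_def: "cinner p q = cinner (fst p) (fst q) + cinner (snd p) (snd q)"

lemma cinner_prod_self: "cinner p p = complex_of_real ((norm (fst p))\<^sup>2 + (norm (snd p))\<^sup>2)"
  by (simp add: cinner_prod_def cinner_self)

instance
proof
  fix p q r :: "'a \<times> 'b" and c :: complex
  show "cinner p q = cnj (cinner q p)"
    by (simp add: cinner_prod_def cinner_commute[of "fst p"] cinner_commute[of "snd p"])
  show "cinner (p + q) r = cinner p r + cinner q r"
    by (simp add: cinner_prod_def cinner_add_left)
  show "cinner (scaleC c p) q = c * cinner p q"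
    by (simp add: cinner_prod_def scaleC_prod_def cinner_scaleC_left distrib_left)
  show "Im (cinner p p) = 0" "0 \<le> Re (cinner p p)"
    by (simp_all add: cinner_prod_self)
  show "cinner p p = 0 \<longleftrightarrow> p = 0"
    using add_nonneg_eq_0_iff[of "(norm (fst p))\<^sup>2" "(norm (snd p))\<^sup>2"]
    by (simp only: cinner_prod_self of_real_eq_0_iff) (simp add: prod_eq_iff)
  show "norm p = sqrt (Re (cinner p p))"
    by (simp add: cinner_prod_self norm_prod_def)
qed

end

instance prod :: (chilbert_space, chilbert_space) chilbert_space ..

lemma pinner_eq_cinner: "pinner = cinner"
  by (simp add: fun_eq_iff pinner_def cinner_prod_def)

lemma proj2_eq_proj: "proj2 = proj"
  by (simp add: fun_eq_iff proj2_def proj_def pinner_eq_cinner)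

section \<open>Orthogonal projections\<close>

definition csubspace :: "'a::complex_vector set \<Rightarrow> bool" where
  "csubspace M \<longleftrightarrow> 0 \<in> M \<and> (\<forall>x\<in>M. \<forall>y\<in>M. x + y \<in> M) \<and> (\<forall>c. \<forall>x\<in>M. scaleC c x \<in> M)"

lemma csubspace_0: "csubspace M \<Longrightarrow> 0 \<in> M"
  by (simp add: csubspace_def)

lemma csubspace_add: "csubspace M \<Longrightarrow> x \<in> M \<Longrightarrow> y \<in> M \<Longrightarrow> x + y \<in> M"
  by (simp add: csubspace_def)

lemma csubspace_scaleC: "csubspace M \<Longrightarrow> x \<in> M \<Longrightarrow> scaleC c x \<in> M"
  by (simp add: csubspace_def)

lemma csubspace_scaleR: "csubspace M \<Longrightarrow> x \<in> M \<Longrightarrow> r *\<^sub>R x \<in> M"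
  by (simp add: csubspace_scaleC scaleR_scaleC)

lemma csubspace_diff: "csubspace M \<Longrightarrow> x \<in> M \<Longrightarrow> y \<in> M \<Longrightarrow> x - y \<in> M"
  using csubspace_add[of M x "(-1) *\<^sub>R y"] csubspace_scaleR[of M y "-1"] by simp

lemma rel_subspace_iff_csubspace: "rel_subspace R \<longleftrightarrow> csubspace R"
  by (simp add: rel_subspace_def csubspace_def scaleC_prod_def zero_prod_def plus_prod_def)

lemma csubspace_ortho: "csubspace (ortho M)"
  by (simp add: csubspace_def ortho_def cinner_add_left cinner_scaleC_left)

lemma norm_parallelogram:
  fixes x y :: "'a::complex_inner"
  shows "(norm (x + y))\<^sup>2 + (norm (x - y))\<^sup>2 = 2 * (norm x)\<^sup>2 + 2 * (norm y)\<^sup>2"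
  by (simp add: norm_add_square norm_diff_square)

lemma near_minimizers_close:
  fixes x :: "'a::complex_inner"
  assumes M: "csubspace M" "a \<in> M" "b \<in> M"
    and dist_M: "\<And>z. z \<in> M \<Longrightarrow> d \<le> norm (x - z)" and "0 \<le> d"
    and a: "norm (x - a) \<le> d + e" and b: "norm (x - b) \<le> d + e'"
  shows "(norm (a - b))\<^sup>2 \<le> 2 * (d + e)\<^sup>2 + 2 * (d + e')\<^sup>2 - 4 * d\<^sup>2"
proof -
  have "(1/2) *\<^sub>R (a + b) \<in> M"
    using M by (simp add: csubspace_add csubspace_scaleR)
  then have "2 * d \<le> norm (2 *\<^sub>R (x - (1/2) *\<^sub>R (a + b)))"
    using dist_M by simp
  also have "2 *\<^sub>R (x - (1/2) *\<^sub>R (a + b)) = (x - a) + (x - b)"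
    by (simp add: scaleR_diff_right scaleR_2 algebra_simps)
  finally have "4 * d\<^sup>2 \<le> (norm ((x - a) + (x - b)))\<^sup>2"
    using \<open>0 \<le> d\<close> power_mono[of "2 * d" _ 2] by (simp add: power_mult_distrib)
  moreover have "(norm (x - a))\<^sup>2 \<le> (d + e)\<^sup>2" "(norm (x - b))\<^sup>2 \<le> (d + e')\<^sup>2"
    using a b by (simp_all add: power_mono)
  moreover have "(x - a) - (x - b) = b - a"
    by simp
  ultimately show ?thesis
    using norm_parallelogram[of "x - a" "x - b"] by (simp add: norm_minus_commute)
qed

lemma closed_csubspace_nearest_point:
  fixes x :: "'a::chilbert_space"
  assumes M: "csubspace M" "closed M"
  obtains y where "y \<in> M" "\<And>z. z \<in> M \<Longrightarrow> norm (x - y) \<le> norm (x - z)"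
proof -
  define d where "d = Inf ((\<lambda>z. norm (x - z)) ` M)"
  have bdd: "bdd_below ((\<lambda>z. norm (x - z)) ` M)"
    by (rule bdd_belowI[of _ 0]) auto
  have d_le: "d \<le> norm (x - z)" if "z \<in> M" for z
    unfolding d_def using bdd that by (rule cINF_lower)
  have "0 \<le> d"
    unfolding d_def using csubspace_0[OF M(1)] by (intro cINF_greatest) auto
  have "\<exists>m\<in>M. norm (x - m) < d + inverse (real (Suc n))" for n
  proof -
    have "Inf ((\<lambda>z. norm (x - z)) ` M) < d + inverse (real (Suc n))"
      unfolding d_def by simp
    then show ?thesis
      using csubspace_0[OF M(1)] bdd by (subst (asm) cINF_less_iff) auto
  qed
  then obtain m where m: "\<And>n. m n \<in> M" "\<And>n. norm (x - m n) < d + inverse (real (Suc n))"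
    by metis
  have "Cauchy m"
  proof (rule metric_CauchyI)
    fix e :: real
    assume "e > 0"
    have "(\<lambda>N. 4 * (d + inverse (real (Suc N)))\<^sup>2 - 4 * d\<^sup>2) \<longlonglongrightarrow> 4 * (d + 0)\<^sup>2 - 4 * d\<^sup>2"
      by (intro tendsto_intros LIMSEQ_inverse_real_of_nat)
    then have "\<forall>\<^sub>F N in sequentially. 4 * (d + inverse (real (Suc N)))\<^sup>2 - 4 * d\<^sup>2 < e\<^sup>2"
      using \<open>e > 0\<close> by (intro order_tendstoD(2)) auto
    then obtain N where N: "4 * (d + inverse (real (Suc N)))\<^sup>2 - 4 * d\<^sup>2 < e\<^sup>2"
      by (auto simp: eventually_sequentially)
    have "dist (m n) (m k) < e" if "n \<ge> N" "k \<ge> N" for n k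
    proof -
      have "inverse (real (Suc n)) \<le> inverse (real (Suc N))" "inverse (real (Suc k)) \<le> inverse (real (Suc N))"
        using that by (simp_all add: le_imp_inverse_le)
      then have "norm (x - m n) \<le> d + inverse (real (Suc N))" "norm (x - m k) \<le> d + inverse (real (Suc N))"
        using m(2)[of n] m(2)[of k] by linarith+
      then have "(norm (m n - m k))\<^sup>2
          \<le> 2 * (d + inverse (real (Suc N)))\<^sup>2 + 2 * (d + inverse (real (Suc N)))\<^sup>2 - 4 * d\<^sup>2"
        by (intro near_minimizers_close[OF M(1) m(1) m(1) d_le \<open>0 \<le> d\<close>])
      then have "(norm (m n - m k))\<^sup>2 < e\<^sup>2"
        using N by linarith
      then have "norm (m n - m k) < e"
        by (rule power_less_imp_less_base) (use \<open>e > 0\<close> in simp)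
      then show ?thesis
        by (simp add: dist_norm)
    qed
    then show "\<exists>N. \<forall>n\<ge>N. \<forall>k\<ge>N. dist (m n) (m k) < e"
      by blast
  qed
  then obtain y where y: "m \<longlonglongrightarrow> y"
    using Cauchy_convergent_iff convergent_def by blast
  have "norm (x - y) \<le> d"
  proof (rule LIMSEQ_le)
    show "(\<lambda>n. norm (x - m n)) \<longlonglongrightarrow> norm (x - y)"
      by (intro tendsto_intros y)
    show "(\<lambda>n. d + inverse (real (Suc n))) \<longlonglongrightarrow> d"
      by (rule LIMSEQ_inverse_real_of_nat_add)
    show "\<exists>N. \<forall>n\<ge>N. norm (x - m n) \<le> d + inverse (real (Suc n))"
      by (intro exI[of _ 0] allI impI less_imp_le m(2))
  qed
  show ?thesis
  proof (rule that)
    show "y \<in> M"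
      using closed_sequentially[OF M(2)] m(1) y by blast
    show "norm (x - y) \<le> norm (x - z)" if "z \<in> M" for z
      using \<open>norm (x - y) \<le> d\<close> d_le[OF that] by linarith
  qed
qed

lemma linear_le_quadratic_imp_zero:
  fixes a b :: real
  assumes "\<And>t. 2 * t * a \<le> t\<^sup>2 * b"
  shows "a = 0"
proof -
  define c where "c = \<bar>b\<bar> + 1"
  have "c > 0"
    by (simp add: c_def)
  have "(2 * (a / c) * a) * c\<^sup>2 \<le> ((a / c)\<^sup>2 * b) * c\<^sup>2"
    using assms[of "a / c"] by (rule mult_right_mono) simp
  then have "a * a * (2 * c) \<le> a * a * b"
    using \<open>c > 0\<close> by (simp add: field_simps power2_eq_square)
  also have "\<dots> \<le> a * a * \<bar>b\<bar>"
    by (simp add: mult_left_mono)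
  finally have "a * a * (2 * c - \<bar>b\<bar>) \<le> 0"
    by (simp add: algebra_simps)
  moreover have "2 * c - \<bar>b\<bar> > 0"
    by (simp add: c_def)
  ultimately show ?thesis
    by (simp add: mult_le_0_iff) linarith
qed

lemma nearest_point_orthogonal:
  fixes x :: "'a::complex_inner"
  assumes M: "csubspace M" "y \<in> M" and nearest: "\<And>z. z \<in> M \<Longrightarrow> norm (x - y) \<le> norm (x - z)"
    and "z \<in> M"
  shows "cinner (x - y) z = 0"
proof -
  have Re_0: "Re (cinner (x - y) z) = 0" if "z \<in> M" for z
  proof (rule linear_le_quadratic_imp_zero)
    fix t :: real
    have "(norm (x - y))\<^sup>2 \<le> (norm (x - (y + t *\<^sub>R z)))\<^sup>2"
      using M that by (simp add: nearest csubspace_add csubspace_scaleR power_mono)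
    also have "\<dots> = (norm (x - y))\<^sup>2 + t\<^sup>2 * (norm z)\<^sup>2 - 2 * (t * Re (cinner (x - y) z))"
      by (simp add: diff_diff_eq[symmetric] norm_diff_square cinner_scaleR_right power_mult_distrib)
    finally show "2 * t * Re (cinner (x - y) z) \<le> t\<^sup>2 * (norm z)\<^sup>2"
      by simp
  qed
  have "Im (cinner (x - y) z) = Re (cinner (x - y) (scaleC \<i> z))"
    by (simp add: cinner_scaleC_right)
  also have "\<dots> = 0"
    using M \<open>z \<in> M\<close> by (simp add: Re_0 csubspace_scaleC)
  finally show ?thesis
    using Re_0[OF \<open>z \<in> M\<close>] by (simp add: complex_eq_iff)
qed

lemma proj_eqI:
  fixes x :: "'a::complex_inner"
  assumes M: "csubspace M" "y \<in> M" and orth: "\<And>z. z \<in> M \<Longrightarrow> cinner (x - y) z = 0"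
  shows "proj M x = y"
  unfolding proj_def
proof (rule the_equality)
  fix y'
  assume y': "y' \<in> M \<and> (\<forall>z\<in>M. cinner (x - y') z = 0)"
  then have "y' - y \<in> M"
    using M csubspace_diff by blast
  then have "cinner (y' - y) (y' - y) = cinner (x - y) (y' - y) - cinner (x - y') (y' - y)"
    by (simp add: cinner_diff_left)
  also have "\<dots> = 0"
    using y' orth \<open>y' - y \<in> M\<close> by simp
  finally show "y' = y"
    by (simp add: cinner_eq_zero_iff)
qed (use M orth in blast)

lemma proj_in_orthogonal:
  fixes x :: "'a::chilbert_space"
  assumes "csubspace M" "closed M"
  shows "proj M x \<in> M \<and> (\<forall>z\<in>M. cinner (x - proj M x) z = 0)"
proof -
  obtain y where "y \<in> M" "\<And>z. z \<in> M \<Longrightarrow> norm (x - y) \<le> norm (x - z)"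
    using closed_csubspace_nearest_point[OF assms] by blast
  then have "\<And>z. z \<in> M \<Longrightarrow> cinner (x - y) z = 0"
    using nearest_point_orthogonal[OF assms(1)] by blast
  with \<open>y \<in> M\<close> show ?thesis
    using proj_eqI[OF assms(1)] by simp
qed

lemma proj_in: "csubspace M \<Longrightarrow> closed M \<Longrightarrow> proj M (x::'a::chilbert_space) \<in> M"
  using proj_in_orthogonal by blast

lemma cinner_minus_proj:
  "csubspace M \<Longrightarrow> closed M \<Longrightarrow> z \<in> M \<Longrightarrow> cinner (x - proj M (x::'a::chilbert_space)) z = 0"
  using proj_in_orthogonal by blast

lemma proj_id: "csubspace M \<Longrightarrow> m \<in> M \<Longrightarrow> proj M (m::'a::complex_inner) = m"
  by (rule proj_eqI) simp_all

lemma proj_ortho: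
  fixes x :: "'a::chilbert_space"
  assumes "csubspace M" "closed M"
  shows "proj (ortho M) x = x - proj M x"
proof (rule proj_eqI[OF csubspace_ortho])
  show "x - proj M x \<in> ortho M"
    using cinner_minus_proj[OF assms] by (simp add: ortho_def)
  show "cinner (x - (x - proj M x)) z = 0" if "z \<in> ortho M" for z
    using that proj_in[OF assms] cinner_commute[of "proj M x" z] by (simp add: ortho_def)
qed

lemma norm_proj_pythagoras:
  fixes x :: "'a::chilbert_space"
  assumes "csubspace M" "closed M"
  shows "(norm x)\<^sup>2 = (norm (proj M x))\<^sup>2 + (norm (x - proj M x))\<^sup>2"
proof -
  have "Re (cinner (proj M x) (x - proj M x)) = 0"
    using cinner_minus_proj[OF assms proj_in[OF assms]] cinner_commute[of "proj M x"] by simp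
  then show ?thesis
    using norm_add_square[of "proj M x" "x - proj M x"] by simp
qed

lemma norm_proj_le: "csubspace M \<Longrightarrow> closed M \<Longrightarrow> norm (proj M x) \<le> norm (x::'a::chilbert_space)"
  using norm_proj_pythagoras[of M x] by (simp add: power2_le_imp_le)

lemma norm_minus_proj_le:
  "csubspace M \<Longrightarrow> closed M \<Longrightarrow> norm (x - proj M x) \<le> norm (x::'a::chilbert_space)"
  using norm_proj_pythagoras[of M x] by (simp add: power2_le_imp_le)

lemma bounded_linear_proj:
  assumes "csubspace M" "closed M"
  shows "bounded_linear (proj M :: 'a::chilbert_space \<Rightarrow> 'a)"
proof (rule bounded_linear_intro[where K = 1])
  fix x y :: 'a and r :: real
  show "proj M (x + y) = proj M x + proj M y"
  proof (rule proj_eqI[OF assms(1)])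
    show "proj M x + proj M y \<in> M"
      using assms by (simp add: csubspace_add proj_in)
    have split: "x + y - (proj M x + proj M y) = (x - proj M x) + (y - proj M y)"
      by simp
    show "cinner (x + y - (proj M x + proj M y)) z = 0" if "z \<in> M" for z
      unfolding split using cinner_minus_proj[OF assms that] by (simp add: cinner_add_left)
  qed
  show "proj M (r *\<^sub>R x) = r *\<^sub>R proj M x"
    using assms by (intro proj_eqI)
      (simp_all add: csubspace_scaleR proj_in cinner_scaleR_left cinner_minus_proj flip: scaleR_diff_right)
  show "norm (proj M x) \<le> norm x * 1"
    using norm_proj_le[OF assms] by simp
qed

lemma cinner_proj_commute:
  fixes p q :: "'a::chilbert_space"
  assumes "csubspace M" "closed M"
  shows "cinner (proj M p) q = cinner p (proj M q)"
proof -
  have "cinner (proj M p) q = cinner (proj M p) (proj M q)"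
    using cinner_minus_proj[OF assms proj_in[OF assms], of q p] cinner_commute[of "q - proj M q"]
    by (simp add: cinner_diff_right)
  also have "\<dots> = cinner p (proj M q)"
    using cinner_minus_proj[OF assms proj_in[OF assms], of p q] by (simp add: cinner_diff_left)
  finally show ?thesis .
qed

lemma linear_proj: "csubspace M \<Longrightarrow> closed M \<Longrightarrow> linear (proj M :: 'a::chilbert_space \<Rightarrow> 'a)"
  using bounded_linear_proj bounded_linear.linear by blast

lemma cinner_proj_minus_proj_comp:
  fixes p q :: "'a::chilbert_space"
  assumes M: "csubspace M" "closed M" and N: "csubspace N" "closed N"
  shows "cinner (proj M p - proj N (proj M p)) q = cinner p (proj M (q - proj N q))"
proof -
  have "cinner (proj M p - proj N (proj M p)) q = cinner (proj M p) q - cinner (proj M p) (proj N q)"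
    by (simp only: cinner_diff_left cinner_proj_commute[OF N])
  also have "\<dots> = cinner (proj M p) (q - proj N q)"
    by (simp only: cinner_diff_right)
  also have "\<dots> = cinner p (proj M (q - proj N q))"
    by (rule cinner_proj_commute[OF M])
  finally show ?thesis .
qed

section \<open>Compact operators\<close>

definition has_convergent_subseq :: "(nat \<Rightarrow> 'a::topological_space) \<Rightarrow> bool" where
  "has_convergent_subseq s \<longleftrightarrow> (\<exists>r l. strict_mono r \<and> (\<lambda>n. s (r n)) \<longlonglongrightarrow> l)"

lemma has_convergent_subseqE:
  assumes "has_convergent_subseq s"
  obtains r l where "strict_mono r" "(\<lambda>n. s (r n)) \<longlonglongrightarrow> l"
  using assms by (auto simp: has_convergent_subseq_def)

lemma has_convergent_subseqI: "strict_mono r \<Longrightarrow> (\<lambda>n. s (r n)) \<longlonglongrightarrow> l \<Longrightarrow> has_convergent_subseq s"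
  by (auto simp: has_convergent_subseq_def)

lemma has_convergent_subseq_pair:
  assumes "has_convergent_subseq f"
    and "\<And>r. strict_mono r \<Longrightarrow> has_convergent_subseq (\<lambda>n. g (r n))"
  obtains r l l' where "strict_mono r" "(\<lambda>n. f (r n)) \<longlonglongrightarrow> l" "(\<lambda>n. g (r n)) \<longlonglongrightarrow> l'"
proof -
  obtain r1 l where r1: "strict_mono r1" and l: "(\<lambda>n. f (r1 n)) \<longlonglongrightarrow> l"
    using assms(1) by (rule has_convergent_subseqE)
  obtain r2 l' where r2: "strict_mono r2" and l': "(\<lambda>n. g (r1 (r2 n))) \<longlonglongrightarrow> l'"
    using assms(2)[OF r1] by (rule has_convergent_subseqE)
  have "(\<lambda>n. f (r1 (r2 n))) \<longlonglongrightarrow> l"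
    using LIMSEQ_subseq_LIMSEQ[OF l r2] by (simp add: o_def)
  then show ?thesis
    using that[of "r1 \<circ> r2"] strict_mono_o[OF r1 r2] l' by (simp add: o_def)
qed

lemma compact_closure_iff_has_convergent_subseq:
  fixes E :: "'a::real_normed_vector set"
  shows "compact (closure E) \<longleftrightarrow> (\<forall>s. (\<forall>n. s n \<in> E) \<longrightarrow> has_convergent_subseq s)"
proof
  assume "compact (closure E)"
  then have "seq_compact (closure E)"
    by (rule compact_imp_seq_compact)
  show "\<forall>s. (\<forall>n. s n \<in> E) \<longrightarrow> has_convergent_subseq s"
  proof (intro allI impI)
    fix s :: "nat \<Rightarrow> 'a" assume "\<forall>n. s n \<in> E"
    then have "\<forall>n. s n \<in> closure E"
      using closure_subset by blast
    then obtain l and r :: "nat \<Rightarrow> nat" where "strict_mono r" "(s \<circ> r) \<longlonglongrightarrow> l"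
      using \<open>seq_compact (closure E)\<close> seq_compactE by blast
    then show "has_convergent_subseq s"
      by (auto intro: has_convergent_subseqI simp: o_def)
  qed
next
  assume E: "\<forall>s. (\<forall>n. s n \<in> E) \<longrightarrow> has_convergent_subseq s"
  have "seq_compact (closure E)"
    unfolding seq_compact_def
  proof (intro allI impI)
    fix s :: "nat \<Rightarrow> 'a" assume s: "\<forall>n. s n \<in> closure E"
    \<comment> \<open>approximate \<open>s\<close> by a sequence in \<open>E\<close> and transfer a convergent subsequence back\<close>
    have "\<forall>n. \<exists>t\<in>E. dist t (s n) < inverse (real (Suc n))"
      using s by (auto simp: closure_approachable)
    then obtain t where t: "\<And>n. t n \<in> E" "\<And>n. dist (t n) (s n) < inverse (real (Suc n))"
      by metis
    have "has_convergent_subseq t"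
      using E t(1) by blast
    then obtain r l where r: "strict_mono r" and tl: "(\<lambda>n. t (r n)) \<longlonglongrightarrow> l"
      by (rule has_convergent_subseqE)
    have "(\<lambda>n. s (r n) - t (r n)) \<longlonglongrightarrow> 0"
    proof (rule Lim_null_comparison[OF _ LIMSEQ_inverse_real_of_nat])
      have "norm (s (r n) - t (r n)) \<le> inverse (real (Suc n))" for n
        using t(2)[of "r n"] seq_suble[OF r, of n]
        by (smt (verit) dist_norm norm_minus_commute le_imp_inverse_le of_nat_Suc of_nat_mono
            of_nat_0_less_iff zero_less_Suc)
      then show "\<forall>\<^sub>F n in sequentially. norm (s (r n) - t (r n)) \<le> inverse (real (Suc n))"
        by simp
    qed
    then have sl: "(\<lambda>n. s (r n)) \<longlonglongrightarrow> l"
      by (rule Lim_transform[OF tl])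
    then have "l \<in> closure E"
      using closed_sequentially[of "closure E" "s \<circ> r" l] s by (simp add: o_def)
    with r sl show "\<exists>l\<in>closure E. \<exists>r. strict_mono r \<and> (s \<circ> r) \<longlonglongrightarrow> l"
      by (auto simp: o_def)
  qed
  then show "compact (closure E)"
    by (simp add: compact_eq_seq_compact_metric)
qed

lemma compact_closure_image_iff:
  fixes f :: "'a \<Rightarrow> 'b::real_normed_vector"
  shows "compact (closure (f ` B)) \<longleftrightarrow> (\<forall>s::nat \<Rightarrow> 'a. (\<forall>n. s n \<in> B) \<longrightarrow> has_convergent_subseq (\<lambda>n. f (s n)))"
  unfolding compact_closure_iff_has_convergent_subseq
proof (intro iffI allI impI)
  fix s :: "nat \<Rightarrow> 'a" assume "\<forall>t. (\<forall>n. t n \<in> f ` B) \<longrightarrow> has_convergent_subseq t" "\<forall>n. s n \<in> B"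
  then show "has_convergent_subseq (\<lambda>n. f (s n))"
    by simp
next
  fix t :: "nat \<Rightarrow> 'b" assume B: "\<forall>s. (\<forall>n. s n \<in> B) \<longrightarrow> has_convergent_subseq (\<lambda>n. f (s n))"
    and "\<forall>n. t n \<in> f ` B"
  then have "\<forall>n. \<exists>x. x \<in> B \<and> t n = f x"
    by blast
  then obtain s where "\<forall>n. s n \<in> B \<and> t n = f (s n)"
    by metis
  moreover from this have "t = (\<lambda>n. f (s n))"
    by auto
  ultimately show "has_convergent_subseq t"
    using B by simp
qed

lemma compact_operatorD:
  fixes K :: "'a::real_normed_vector \<Rightarrow> 'b::real_normed_vector"
  assumes "compact_operator K" "\<And>n. norm (s n) \<le> c"
  shows "has_convergent_subseq (\<lambda>n. K (s n))"
proof -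
  have "bounded (range s)"
    using assms(2) by (auto simp: bounded_iff)
  then show ?thesis
    using assms(1) by (auto simp: compact_operator_def compact_closure_image_iff)
qed

lemma compact_operatorI:
  fixes K :: "'a::real_normed_vector \<Rightarrow> 'b::real_normed_vector"
  assumes "\<And>s c. (\<And>n. norm (s n) \<le> c) \<Longrightarrow> has_convergent_subseq (\<lambda>n. K (s n))"
  shows "compact_operator K"
  unfolding compact_operator_def compact_closure_image_iff
proof (intro allI impI)
  fix B :: "'a set" and s :: "nat \<Rightarrow> 'a"
  assume "bounded B" "\<forall>n. s n \<in> B"
  then obtain c where "\<And>n. norm (s n) \<le> c"
    by (auto simp: bounded_iff)
  then show "has_convergent_subseq (\<lambda>n. K (s n))"
    by (rule assms)
qed

lemma rel_compactD:
  assumes "rel_compact U V D" "\<And>n. s n \<in> D" "\<And>n. norm (s n) + norm (V (s n)) \<le> c"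
  shows "has_convergent_subseq (\<lambda>n. U (s n))"
proof -
  have "range s \<subseteq> D" "\<forall>x\<in>range s. norm x + norm (V x) \<le> c"
    using assms(2,3) by auto
  then show ?thesis
    using assms(1) unfolding rel_compact_def compact_closure_image_iff by blast
qed

lemma rel_compactI:
  assumes "\<And>s c. (\<And>n. s n \<in> D) \<Longrightarrow> (\<And>n. norm (s n) + norm (V (s n)) \<le> c) \<Longrightarrow>
      has_convergent_subseq (\<lambda>n. U (s n))"
  shows "rel_compact U V D"
  unfolding rel_compact_def compact_closure_image_iff
proof (intro allI impI)
  fix B and s :: "nat \<Rightarrow> 'a"
  assume "B \<subseteq> D" "\<exists>K. \<forall>x\<in>B. norm x + norm (V x) \<le> K" "\<forall>n. s n \<in> B"
  then obtain c where "\<And>n. s n \<in> D" "\<And>n. norm (s n) + norm (V (s n)) \<le> c"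
    by blast
  then show "has_convergent_subseq (\<lambda>n. U (s n))"
    by (rule assms)
qed

lemma compact_operator_diff:
  assumes F: "compact_operator F" and G: "compact_operator G"
  shows "compact_operator (\<lambda>p. F p - G p)"
proof (rule compact_operatorI)
  fix s :: "nat \<Rightarrow> 'a" and c
  assume s: "\<And>n. norm (s n) \<le> c"
  have "has_convergent_subseq (\<lambda>n. F (s n))"
    using F s by (rule compact_operatorD)
  moreover have "has_convergent_subseq (\<lambda>n. G (s (r n)))" for r
    using G s by (rule compact_operatorD)
  ultimately obtain r l l' where
    r: "strict_mono r" and "(\<lambda>n. F (s (r n))) \<longlonglongrightarrow> l" "(\<lambda>n. G (s (r n))) \<longlonglongrightarrow> l'"
    by (rule has_convergent_subseq_pair[where f = "\<lambda>n. F (s n)" and g = "\<lambda>n. G (s n)"])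
  then have "(\<lambda>n. F (s (r n)) - G (s (r n))) \<longlonglongrightarrow> l - l'"
    by (intro tendsto_diff)
  with r show "has_convergent_subseq (\<lambda>n. F (s n) - G (s n))"
    by (rule has_convergent_subseqI)
qed

lemma compact_operator_bounded_linear:
  fixes V :: "'a::real_normed_vector \<Rightarrow> 'b::real_normed_vector"
  assumes "compact_operator V" and "linear V"
  shows "bounded_linear V"
proof -
  have "\<exists>K. \<forall>u. norm (V u) \<le> K * norm u"
  proof (rule ccontr)
    assume "\<not> ?thesis"
    then have "\<forall>n::nat. \<exists>u. norm (V u) > real n * norm u"
      by (metis not_le)
    then obtain u where u: "\<And>n. norm (V (u n)) > real n * norm (u n)"
      by metis
    have "u n \<noteq> 0" for n
      using u[of n] linear_0[OF \<open>linear V\<close>] by auto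
    \<comment> \<open>the normalised sequence is bounded, but its image is not\<close>
    define z where "z n = inverse (norm (u n)) *\<^sub>R u n" for n
    have "norm (z n) \<le> 1" for n
      using \<open>u n \<noteq> 0\<close> by (simp add: z_def)
    then have "has_convergent_subseq (\<lambda>n. V (z n))"
      by (rule compact_operatorD[OF assms(1)])
    then obtain r l where r: "strict_mono r" and l: "(\<lambda>n. V (z (r n))) \<longlonglongrightarrow> l"
      by (rule has_convergent_subseqE)
    obtain B where B: "\<And>n. norm (V (z (r n))) \<le> B"
      using convergent_imp_bounded[OF l] by (auto simp: bounded_iff)
    obtain n :: nat where n: "real n > B"
      using reals_Archimedean2 by blast
    have "norm (V (z (r n))) = norm (V (u (r n))) / norm (u (r n))"
      by (simp add: z_def linear_scale[OF \<open>linear V\<close>] divide_inverse_commute)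
    also have "\<dots> > real (r n)"
      using u[of "r n"] \<open>u (r n) \<noteq> 0\<close> by (simp add: pos_less_divide_eq)
    finally have "norm (V (z (r n))) > real n"
      using seq_suble[OF r, of n] by linarith
    with B[of n] n show False
      by linarith
  qed
  then obtain K where "\<And>u. norm (V u) \<le> K * norm u"
    by blast
  with \<open>linear V\<close> show ?thesis
    by (intro bounded_linear_intro[where K = K]) (simp_all add: linear_add linear_scale mult.commute)
qed

lemma adjoint_diff:
  fixes C E :: "'a::complex_inner \<Rightarrow> 'a"
  assumes adj: "\<And>p q. cinner (C p) q = cinner p (E q)"
  shows "E (q - q') = E q - E q'"
proof -
  have "cinner p (E (q - q') - (E q - E q')) = 0" for p
    by (simp add: cinner_diff_right flip: adj)
  from this[of "E (q - q') - (E q - E q')"] show ?thesis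
    by (simp add: cinner_eq_zero_iff)
qed

lemma norm_adjoint_square_le:
  fixes C E :: "'a::complex_inner \<Rightarrow> 'a"
  assumes adj: "\<And>p q. cinner (C p) q = cinner p (E q)"
  shows "(norm (E u))\<^sup>2 \<le> norm (C (E u)) * norm u"
proof -
  have "(norm (E u))\<^sup>2 = Re (cinner (C (E u)) u)"
    by (simp add: adj Re_cinner_self)
  also have "\<dots> \<le> cmod (cinner (C (E u)) u)"
    by (rule complex_Re_le_cmod)
  also have "\<dots> \<le> norm (C (E u)) * norm u"
    by (rule norm_cinner_le)
  finally show ?thesis .
qed

lemma compact_operator_adjoint:
  fixes C E :: "'a::chilbert_space \<Rightarrow> 'a"
  assumes C: "compact_operator C" and adj: "\<And>p q. cinner (C p) q = cinner p (E q)"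
    and E_bounded: "\<And>p. norm (E p) \<le> K * norm p"
  shows "compact_operator E"
proof (rule compact_operatorI)
  fix s :: "nat \<Rightarrow> 'a" and c
  assume s: "\<And>n. norm (s n) \<le> c"
  have "0 \<le> c"
    using s[of 0] norm_ge_zero[of "s 0"] by linarith
  have "norm (E (s n)) \<le> \<bar>K\<bar> * c" for n
  proof -
    have "norm (E (s n)) \<le> K * norm (s n)"
      by (rule E_bounded)
    also have "\<dots> \<le> \<bar>K\<bar> * norm (s n)"
      by (simp add: mult_right_mono)
    also have "\<dots> \<le> \<bar>K\<bar> * c"
      using s[of n] by (simp add: mult_left_mono)
    finally show ?thesis .
  qed
  then have "has_convergent_subseq (\<lambda>n. C (E (s n)))"
    by (rule compact_operatorD[OF C])
  then obtain r l where r: "strict_mono r" and "(\<lambda>n. C (E (s (r n)))) \<longlonglongrightarrow> l"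
    by (rule has_convergent_subseqE)
  from this(2) have CE_Cauchy: "Cauchy (\<lambda>n. C (E (s (r n))))"
    by (rule LIMSEQ_imp_Cauchy)
  have C_diff: "C (p - p') = C p - C p'" for p p'
  proof (rule adjoint_diff[where E = C])
    show "cinner (E q) p = cinner q (C p)" for p q
      by (simp add: cinner_commute[of "E q" p] cinner_commute[of q "C p"] flip: adj)
  qed
  have "Cauchy (\<lambda>n. E (s (r n)))"
  proof (rule metric_CauchyI)
    fix e :: real
    assume "e > 0"
    define \<delta> where "\<delta> = e\<^sup>2 / (2 * c + 1)"
    have "\<delta> > 0"
      using \<open>e > 0\<close> \<open>0 \<le> c\<close> by (simp add: \<delta>_def)
    then obtain N where N: "\<And>m n. m \<ge> N \<Longrightarrow> n \<ge> N \<Longrightarrow> dist (C (E (s (r m)))) (C (E (s (r n)))) < \<delta>"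
      using metric_CauchyD[OF CE_Cauchy] by blast
    have "dist (E (s (r m))) (E (s (r n))) < e" if "m \<ge> N" "n \<ge> N" for m n
    proof -
      define u where "u = s (r m) - s (r n)"
      have Eu: "E u = E (s (r m)) - E (s (r n))"
        unfolding u_def by (rule adjoint_diff[OF adj])
      have "norm u \<le> 2 * c"
        using norm_triangle_ineq4[of "s (r m)" "s (r n)"] s[of "r m"] s[of "r n"] by (simp add: u_def)
      have "(norm (E u))\<^sup>2 \<le> norm (C (E u)) * norm u"
        by (rule norm_adjoint_square_le[OF adj])
      also have "\<dots> \<le> \<delta> * (2 * c)"
        using N[OF that] \<open>norm u \<le> 2 * c\<close> \<open>\<delta> > 0\<close>
        by (intro mult_mono) (simp_all add: Eu C_diff dist_norm less_imp_le)
      also have "\<dots> < e\<^sup>2"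
        using \<open>e > 0\<close> \<open>0 \<le> c\<close> by (simp add: \<delta>_def field_simps)
      finally have "norm (E u) < e"
        by (rule power_less_imp_less_base) (use \<open>e > 0\<close> in simp)
      then show ?thesis
        by (simp add: Eu dist_norm)
    qed
    then show "\<exists>N. \<forall>m\<ge>N. \<forall>n\<ge>N. dist (E (s (r m))) (E (s (r n))) < e"
      by blast
  qed
  then obtain l' where "(\<lambda>n. E (s (r n))) \<longlonglongrightarrow> l'"
    by (auto simp: Cauchy_convergent_iff convergent_def)
  with r show "has_convergent_subseq (\<lambda>n. E (s n))"
    by (rule has_convergent_subseqI)
qed

lemma compact_operator_solution_bounded:
  fixes V :: "'a::real_normed_vector \<Rightarrow> 'a" and w a :: "nat \<Rightarrow> 'a"
  assumes V: "compact_operator V" "linear V" and no_fixed_point: "\<And>y. V y = y \<Longrightarrow> y = 0"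
    and w_eq: "\<And>n. w n = V (a n) + V (w n)" and a_bound: "\<And>n. norm (a n) \<le> c"
  shows "\<exists>c'. \<forall>n. norm (w n) \<le> c'"
proof (rule ccontr)
  assume "\<not> ?thesis"
  then have "\<forall>k::nat. \<exists>n. norm (w n) > real (Suc k)"
    by (metis not_le)
  then obtain nk where nk: "\<And>k. norm (w (nk k)) > real (Suc k)"
    by metis
  have V_bl: "bounded_linear V"
    using V by (rule compact_operator_bounded_linear)
  \<comment> \<open>\<open>v = w/\<parallel>w\<parallel>\<close> solves \<open>v = V b + V v\<close> with \<open>b \<longlonglongrightarrow> 0\<close>; a limit point of \<open>V v\<close> is a fixed point of norm 1\<close>
  define v where "v k = inverse (norm (w (nk k))) *\<^sub>R w (nk k)" for k
  define b where "b k = inverse (norm (w (nk k))) *\<^sub>R a (nk k)" for k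
  have norm_w_pos: "norm (w (nk k)) > 0" for k
    using nk[of k] by linarith
  have norm_v: "norm (v k) = 1" for k
    using norm_w_pos[of k] by (simp add: v_def)
  have v_eq: "v k = V (b k) + V (v k)" for k
    using w_eq[of "nk k"] by (simp add: v_def b_def linear_scale[OF V(2)] flip: scaleR_add_right)
  have "b \<longlonglongrightarrow> 0"
  proof (rule Lim_null_comparison)
    have "norm (b k) \<le> c * inverse (real (Suc k))" for k
    proof -
      have "inverse (norm (w (nk k))) \<le> inverse (real (Suc k))"
        using nk[of k] by (simp add: le_imp_inverse_le)
      then show ?thesis
        using a_bound[of "nk k"] norm_w_pos[of k]
        by (simp add: b_def divide_inverse mult_mono' mult.commute)
    qed
    then show "\<forall>\<^sub>F k in sequentially. norm (b k) \<le> c * inverse (real (Suc k))"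
      by simp
    show "(\<lambda>k. c * inverse (real (Suc k))) \<longlonglongrightarrow> 0"
      by (intro tendsto_mult_right_zero LIMSEQ_inverse_real_of_nat)
  qed
  then have Vb: "(\<lambda>k. V (b k)) \<longlonglongrightarrow> 0"
    using bounded_linear.tendsto[OF V_bl] linear_0[OF V(2)] by fastforce
  have "has_convergent_subseq (\<lambda>k. V (v k))"
    using compact_operatorD[OF V(1)] norm_v by (metis order_refl)
  then obtain r y where r: "strict_mono r" and Vv: "(\<lambda>k. V (v (r k))) \<longlonglongrightarrow> y"
    by (rule has_convergent_subseqE)
  have "(\<lambda>k. V (b (r k)) + V (v (r k))) \<longlonglongrightarrow> 0 + y"
    using LIMSEQ_subseq_LIMSEQ[OF Vb r] Vv by (intro tendsto_add) (simp_all add: o_def)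
  then have vy: "(\<lambda>k. v (r k)) \<longlonglongrightarrow> y"
    by (simp flip: v_eq)
  then have "norm y = 1"
    using tendsto_norm[OF vy] norm_v by (simp add: LIMSEQ_const_iff)
  moreover have "V y = y"
    using bounded_linear.tendsto[OF V_bl vy] Vv by (rule LIMSEQ_unique)
  ultimately show False
    using no_fixed_point by fastforce
qed

lemma compact_operator_solution_has_convergent_subseq:
  fixes V :: "'a::real_normed_vector \<Rightarrow> 'a" and w a :: "nat \<Rightarrow> 'a"
  assumes V: "compact_operator V" "linear V" and no_fixed_point: "\<And>y. V y = y \<Longrightarrow> y = 0"
    and w_eq: "\<And>n. w n = V (a n) + V (w n)" and a_bound: "\<And>n. norm (a n) \<le> c"
  shows "has_convergent_subseq w"
proof -
  have "\<exists>c'. \<forall>n. norm (w n) \<le> c'"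
    using V no_fixed_point w_eq a_bound by (rule compact_operator_solution_bounded)
  then obtain c' where w_bound: "\<And>n. norm (w n) \<le> c'"
    by blast
  have "has_convergent_subseq (\<lambda>n. V (a n))"
    using compact_operatorD[OF V(1) a_bound] .
  moreover have "has_convergent_subseq (\<lambda>n. V (w (r n)))" for r
    by (rule compact_operatorD[OF V(1)], rule w_bound)
  ultimately obtain r l l' where
    r: "strict_mono r" and "(\<lambda>n. V (a (r n))) \<longlonglongrightarrow> l" "(\<lambda>n. V (w (r n))) \<longlonglongrightarrow> l'"
    by (rule has_convergent_subseq_pair[where f = "\<lambda>n. V (a n)" and g = "\<lambda>n. V (w n)"])
  then have "(\<lambda>n. w (r n)) \<longlonglongrightarrow> l + l'"
    by (subst w_eq) (rule tendsto_add)
  with r show ?thesis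
    by (rule has_convergent_subseqI)
qed

lemma Cauchy_image_lipschitz:
  fixes y :: "nat \<Rightarrow> 'a::real_normed_vector" and F :: "'a \<Rightarrow> 'b::real_normed_vector"
  assumes "Cauchy y" and lipschitz: "\<And>m n. norm (F (y m) - F (y n)) \<le> K * norm (y m - y n)"
  shows "Cauchy (\<lambda>n. F (y n))"
proof (rule metric_CauchyI)
  fix e :: real
  assume "e > 0"
  then have "e / (\<bar>K\<bar> + 1) > 0"
    by simp
  then obtain N where N: "\<And>m n. m \<ge> N \<Longrightarrow> n \<ge> N \<Longrightarrow> norm (y m - y n) < e / (\<bar>K\<bar> + 1)"
    using metric_CauchyD[OF assms(1)] by (metis dist_norm)
  have "dist (F (y m)) (F (y n)) < e" if "m \<ge> N" "n \<ge> N" for m n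
  proof -
    have "norm (F (y m) - F (y n)) \<le> \<bar>K\<bar> * norm (y m - y n)"
      using lipschitz[of m n] by (smt (verit) mult_right_mono norm_ge_zero)
    also have "\<dots> \<le> \<bar>K\<bar> * (e / (\<bar>K\<bar> + 1))"
      by (rule mult_left_mono) (use N[OF that] in auto)
    also have "\<dots> < e"
      using \<open>e > 0\<close> by (simp add: field_simps)
    finally show ?thesis
      by (simp add: dist_norm)
  qed
  then show "\<exists>N. \<forall>m\<ge>N. \<forall>n\<ge>N. dist (F (y m)) (F (y n)) < e"
    by blast
qed

section \<open>Linear relations\<close>

lemma rel_subspace_zero: "rel_subspace R \<Longrightarrow> (0, 0) \<in> R"
  by (simp add: rel_subspace_def)

lemma rel_subspace_add: "rel_subspace R \<Longrightarrow> (x, f) \<in> R \<Longrightarrow> (y, g) \<in> R \<Longrightarrow> (x + y, f + g) \<in> R"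
  unfolding rel_subspace_def by fastforce

lemma rel_subspace_scaleC: "rel_subspace R \<Longrightarrow> (x, f) \<in> R \<Longrightarrow> (scaleC c x, scaleC c f) \<in> R"
  unfolding rel_subspace_def by fastforce

lemma rel_subspace_diff:
  "rel_subspace R \<Longrightarrow> (x, f) \<in> R \<Longrightarrow> (y, g) \<in> R \<Longrightarrow> (x - y, f - g) \<in> (R::('a::complex_vector \<times> 'a) set)"
  using csubspace_diff[of R "(x, f)" "(y, g)"] by (simp add: rel_subspace_iff_csubspace)

lemma csubspace_relapp_0: "rel_subspace R \<Longrightarrow> csubspace (relapp R 0)"
  unfolding csubspace_def relapp_def
  using rel_subspace_zero[of R] rel_subspace_add[of R 0] rel_subspace_scaleC[of R 0] by auto

lemma closed_relapp_0: "closed R \<Longrightarrow> closed (relapp R (0::'a::real_normed_vector))"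
proof -
  assume "closed R"
  moreover have "relapp R 0 = (\<lambda>x. (0::'a, x)) -` R"
    by (auto simp: relapp_def)
  ultimately show ?thesis
    by (auto intro!: closed_vimage continuous_intros)
qed

lemma closed_adj: "closed (adj (T::('a::complex_inner \<times> 'a) set))"
proof -
  have "adj T = {p. \<forall>q\<in>T. cinner (snd p) (fst q) = cinner (fst p) (snd q)}"
    unfolding adj_def by (auto simp: case_prod_beta)
  also have "\<dots> = (\<Inter>q\<in>T. {p. cinner (snd p) (fst q) = cinner (fst p) (snd q)})"
    by blast
  finally have "adj T = (\<Inter>q\<in>T. {p. cinner (snd p) (fst q) = cinner (fst p) (snd q)})" .
  moreover have "closed {p. cinner (snd p) (fst q) = cinner (fst p) (snd (q::'a \<times> 'a))}" for q
    by (intro closed_Collect_eq bounded_bilinear.continuous_on[OF bounded_bilinear_cinner]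
        continuous_intros)
  ultimately show ?thesis
    by auto
qed

lemma self_adjoint_imp_closed: "self_adjoint (S::('a::complex_inner \<times> 'a) set) \<Longrightarrow> closed S"
  unfolding self_adjoint_def using closed_adj[of S] by simp

lemma Dom_diff: "rel_subspace R \<Longrightarrow> x \<in> Dom R \<Longrightarrow> y \<in> Dom R \<Longrightarrow> x - y \<in> Dom (R::('a::complex_vector \<times> 'a) set)"
  unfolding Dom_def using rel_subspace_diff by blast

lemma op_fun_eqI:
  assumes R: "rel_subspace R" and xg: "(x, g) \<in> R" and orth: "\<And>h. h \<in> relapp R 0 \<Longrightarrow> cinner g h = 0"
  shows "op_fun R x = (g::'a::complex_inner)"
  unfolding op_fun_def
proof (rule the_equality)
  show "(x, g) \<in> op_part R"
    using xg orth by (auto simp: op_part_def mul_part_def relapp_def pinner_eq_cinner cinner_prod_def)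
next
  fix g'
  assume "(x, g') \<in> op_part R"
  then have g'R: "(x, g') \<in> R" and orth': "\<And>h. (0, h) \<in> R \<Longrightarrow> cinner g' h = 0"
    by (auto simp: op_part_def mul_part_def pinner_eq_cinner cinner_prod_def)
  have "(x - x, g' - g) \<in> R"
    using rel_subspace_diff[OF R g'R xg] .
  then have "(0, g' - g) \<in> R"
    by simp
  then have "cinner (g' - g) (g' - g) = 0"
    using orth'[of "g' - g"] orth[of "g' - g"] by (simp add: relapp_def cinner_diff_left)
  then show "g' = g"
    by (simp add: cinner_eq_zero_iff)
qed

lemma op_fun_eq_minus_proj:
  fixes R :: "('a::chilbert_space \<times> 'a) set"
  assumes R: "rel_subspace R" "closed R" and xf: "(x, f) \<in> R"
  shows "op_fun R x = f - proj (relapp R 0) f" and "(x, f - proj (relapp R 0) f) \<in> R"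
proof -
  have M: "csubspace (relapp R 0)" "closed (relapp R 0)"
    using csubspace_relapp_0[OF R(1)] closed_relapp_0[OF R(2)] .
  have "(0, proj (relapp R 0) f) \<in> R"
    using proj_in[OF M] by (simp add: relapp_def)
  from rel_subspace_diff[OF R(1) xf this] show in_R: "(x, f - proj (relapp R 0) f) \<in> R"
    by simp
  show "op_fun R x = f - proj (relapp R 0) f"
    using cinner_minus_proj[OF M] by (rule op_fun_eqI[OF R(1) in_R])
qed

lemma op_fun_in:
  fixes R :: "('a::chilbert_space \<times> 'a) set"
  assumes "rel_subspace R" "closed R" "x \<in> Dom R"
  shows "(x, op_fun R x) \<in> R"
  using assms op_fun_eq_minus_proj by (fastforce simp: Dom_def)

lemma op_fun_orthogonal:
  fixes R :: "('a::chilbert_space \<times> 'a) set"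
  assumes R: "rel_subspace R" "closed R" and "x \<in> Dom R" "h \<in> relapp R 0"
  shows "cinner (op_fun R x) h = 0"
proof -
  obtain f where "(x, f) \<in> R"
    using assms(3) by (auto simp: Dom_def)
  then show ?thesis
    using op_fun_eq_minus_proj(1)[OF R] cinner_minus_proj csubspace_relapp_0[OF R(1)]
      closed_relapp_0[OF R(2)] assms(4) by metis
qed

lemma norm_op_fun_le:
  fixes R :: "('a::chilbert_space \<times> 'a) set"
  assumes R: "rel_subspace R" "closed R" and "(x, f) \<in> R"
  shows "norm (op_fun R x) \<le> norm f"
  using op_fun_eq_minus_proj(1)[OF R assms(3)]
    norm_minus_proj_le[OF csubspace_relapp_0[OF R(1)] closed_relapp_0[OF R(2)]] by simp

lemma op_fun_add:
  fixes R :: "('a::chilbert_space \<times> 'a) set"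
  assumes R: "rel_subspace R" "closed R" and "x \<in> Dom R" "y \<in> Dom R"
  shows "op_fun R (x + y) = op_fun R x + op_fun R y"
  using rel_subspace_add[OF R(1) op_fun_in[OF R assms(3)] op_fun_in[OF R assms(4)]]
  by (rule op_fun_eqI[OF R(1)]) (simp add: cinner_add_left op_fun_orthogonal[OF R] assms)

lemma op_fun_diff:
  fixes R :: "('a::chilbert_space \<times> 'a) set"
  assumes R: "rel_subspace R" "closed R" and "x \<in> Dom R" "y \<in> Dom R"
  shows "op_fun R (x - y) = op_fun R x - op_fun R y"
  using rel_subspace_diff[OF R(1) op_fun_in[OF R assms(3)] op_fun_in[OF R assms(4)]]
  by (rule op_fun_eqI[OF R(1)]) (simp add: cinner_diff_left op_fun_orthogonal[OF R] assms)

lemma op_fun_scaleC: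
  fixes R :: "('a::chilbert_space \<times> 'a) set"
  assumes R: "rel_subspace R" "closed R" and "x \<in> Dom R"
  shows "op_fun R (scaleC c x) = scaleC c (op_fun R x)"
  using rel_subspace_scaleC[OF R(1) op_fun_in[OF R assms(3)]]
  by (rule op_fun_eqI[OF R(1)]) (simp add: cinner_scaleC_left op_fun_orthogonal[OF R] assms)

lemma resolvent_setE:
  fixes R :: "('a::complex_inner \<times> 'a) set"
  assumes "lam \<in> resolvent_set R"
  obtains Res where "clinear_map Res" "\<exists>K. \<forall>x. norm (Res x) \<le> K * norm x"
    "\<And>x f. (x, f) \<in> R \<Longrightarrow> Res (scaleC lam x - f) = x"
    "\<And>u. (Res u, scaleC lam (Res u) - u) \<in> R"
proof -
  obtain Res where Res: "clinear_map Res" "\<exists>K. \<forall>x. norm (Res x) \<le> K * norm x"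
    and graph: "relinv (relsum (scal_id lam) (relneg R)) = graph Res"
    using assms unfolding resolvent_set_def bounded_everywhere_op_def by blast
  have "(scaleC lam x - f, x) \<in> graph Res" if "(x, f) \<in> R" for x f
    unfolding graph[symmetric] relinv_def relsum_def scal_id_def relneg_def using that by force
  then have left_inverse: "Res (scaleC lam x - f) = x" if "(x, f) \<in> R" for x f
    using that by (simp add: graph_def)
  have right_inverse: "(Res u, scaleC lam (Res u) - u) \<in> R" for u
  proof -
    have "(Res u, u) \<in> relsum (scal_id lam) (relneg R)"
      using graph by (auto simp: relinv_def graph_def)
    then obtain f where f: "(Res u, f) \<in> R" and u: "u = scaleC lam (Res u) - f"
      unfolding relsum_def scal_id_def relneg_def by auto
    have "scaleC lam (Res u) - u = f"
      by (subst u) simp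
    with f show ?thesis
      by simp
  qed
  show ?thesis
    by (rule that[OF Res left_inverse right_inverse])
qed

lemma clinear_map_zero: "clinear_map R \<Longrightarrow> R 0 = 0"
  unfolding clinear_map_def by (metis add_cancel_right_right add_0)

lemma linear_clinear_map: "clinear_map R \<Longrightarrow> linear R"
  unfolding clinear_map_def by (simp add: linear_iff scaleR_scaleC)

section \<open>The decomposition \<open>T = S + Q A\<^sub>s\<close>\<close>

locale self_adjoint_sum =
  fixes T S A :: "('a::chilbert_space \<times> 'a) set"
  assumes T_closed: "closed T" and T_herm: "hermitian T"
    and A_closed: "closed A" and A_subspace: "rel_subspace A"
    and S_sa: "self_adjoint S"
    and dom_eq: "Dom T = Dom S" and dom_sub: "Dom S \<subseteq> Dom A"
    and T_sum: "T = relsum S A"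
begin

abbreviation S0 :: "'a set" where
  "S0 \<equiv> relapp S 0"

definition QA :: "'a \<Rightarrow> 'a" where
  "QA x = proj (ortho S0) (op_fun A x)"

lemma S_subspace: "rel_subspace S"
  using S_sa by (simp add: self_adjoint_def)

lemma T_subspace: "rel_subspace T"
  using T_herm by (simp add: hermitian_def)

lemma S_closed: "closed S"
  using S_sa by (rule self_adjoint_imp_closed)

lemma S0_subspace: "csubspace S0"
  using S_subspace by (rule csubspace_relapp_0)

lemma S0_closed: "closed S0"
  using S_closed by (rule closed_relapp_0)

lemma QA_eq: "QA x = op_fun A x - proj S0 (op_fun A x)"
  unfolding QA_def using S0_subspace S0_closed by (rule proj_ortho)

lemma linear_proj_S0: "linear (proj S0)"
  using S0_subspace S0_closed by (rule linear_proj)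

lemma proj_S0_QA: "proj S0 (QA x) = 0"
  using proj_id[OF S0_subspace proj_in[OF S0_subspace S0_closed]]
  by (simp add: QA_eq linear_diff[OF linear_proj_S0])

lemma op_fun_A_in: "x \<in> Dom S \<Longrightarrow> (x, op_fun A x) \<in> A"
  using op_fun_in[OF A_subspace A_closed] dom_sub by blast

lemma relapp_A_subset: "relapp A 0 \<subseteq> S0"
proof
  fix a
  assume "a \<in> relapp A 0"
  then have "(0, 0 + a) \<in> relsum S A"
    using rel_subspace_zero[OF S_subspace] unfolding relsum_def relapp_def by blast
  then have "(0, a) \<in> adj T"
    using T_herm by (auto simp: T_sum hermitian_def)
  \<comment> \<open>\<open>a\<close> is orthogonal to \<open>D(T) = D(S)\<close>, i.e. \<open>(0, a) \<in> S\<^sup>* = S\<close>\<close>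
  then have "cinner a x = 0" if "x \<in> Dom S" for x
    using that dom_eq by (auto simp: adj_def Dom_def)
  then have "(0, a) \<in> adj S"
    by (auto simp: adj_def Dom_def)
  then show "a \<in> S0"
    using S_sa by (simp add: self_adjoint_def relapp_def)
qed

lemma graph_T_from_S: "(x, f) \<in> S \<Longrightarrow> (x, f + QA x) \<in> T"
proof -
  assume xf: "(x, f) \<in> S"
  then have "x \<in> Dom S"
    by (auto simp: Dom_def)
  have "(0, proj S0 (op_fun A x)) \<in> S"
    using proj_in[OF S0_subspace S0_closed] by (simp add: relapp_def)
  with xf have "(x - 0, f - proj S0 (op_fun A x)) \<in> S"
    by (rule rel_subspace_diff[OF S_subspace])
  then have "(x, (f - proj S0 (op_fun A x)) + op_fun A x) \<in> relsum S A"
    using op_fun_A_in[OF \<open>x \<in> Dom S\<close>] unfolding relsum_def by auto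
  then show ?thesis
    by (simp add: T_sum QA_eq algebra_simps)
qed

lemma graph_S_from_T:
  assumes "(x, f) \<in> T"
  shows "x \<in> Dom S" and "(x, f - QA x) \<in> S"
proof -
  obtain g a where g: "(x, g) \<in> S" and a: "(x, a) \<in> A" and f: "f = g + a"
    using assms unfolding T_sum relsum_def by blast
  show "x \<in> Dom S"
    using g by (auto simp: Dom_def)
  then have "(x - x, a - op_fun A x) \<in> A"
    using rel_subspace_diff[OF A_subspace a op_fun_A_in] by blast
  then have "a - op_fun A x \<in> S0"
    using relapp_A_subset by (auto simp: relapp_def)
  then have "(a - op_fun A x) + proj S0 (op_fun A x) \<in> S0"
    using S0_subspace proj_in[OF S0_subspace S0_closed] by (simp add: csubspace_add)
  then have "(0, (a - op_fun A x) + proj S0 (op_fun A x)) \<in> S"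
    by (simp add: relapp_def)
  from rel_subspace_add[OF S_subspace g this]
  have "(x + 0, g + ((a - op_fun A x) + proj S0 (op_fun A x))) \<in> S" .
  then show "(x, f - QA x) \<in> S"
    by (simp add: f QA_eq algebra_simps)
qed

lemma QA_zero: "QA 0 = 0"
proof -
  have "op_fun A 0 = 0"
    by (rule op_fun_eqI[OF A_subspace rel_subspace_zero[OF A_subspace]]) simp
  then show ?thesis
    by (simp add: QA_eq linear_0[OF linear_proj_S0])
qed

lemma relapp_T_eq: "relapp T 0 = S0"
  using graph_S_from_T(2)[of 0] graph_T_from_S[of 0] by (auto simp: relapp_def QA_zero)

lemma op_fun_T_eq: "(y, g) \<in> T \<Longrightarrow> op_fun T y = g - proj S0 g"
  using op_fun_eq_minus_proj(1)[OF T_subspace T_closed] by (simp add: relapp_T_eq)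

lemma QA_add: "x \<in> Dom S \<Longrightarrow> y \<in> Dom S \<Longrightarrow> QA (x + y) = QA x + QA y"
  using dom_sub by (simp add: QA_eq op_fun_add[OF A_subspace A_closed] subsetD
      linear_add[OF linear_proj_S0])

lemma QA_scaleR: "x \<in> Dom S \<Longrightarrow> QA (r *\<^sub>R x) = r *\<^sub>R QA x"
  using dom_sub op_fun_scaleC[OF A_subspace A_closed, of x "complex_of_real r"]
  by (simp add: QA_eq subsetD linear_scale[OF linear_proj_S0] scaleR_diff_right
      flip: scaleR_scaleC)

lemma S_csubspace: "csubspace S"
  using S_subspace by (simp add: rel_subspace_iff_csubspace)

lemma T_csubspace: "csubspace T"
  using T_subspace by (simp add: rel_subspace_iff_csubspace)

lemma proj_T_minus_proj_S_on_S:
  assumes "(x, f) \<in> S"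
  shows "proj T (x, f) - proj S (x, f) = (0, QA x) - proj T (0, QA x)"
proof -
  have "(x, f) = (x, f + QA x) - (0, QA x)"
    by simp
  then have "proj T (x, f) = (x, f + QA x) - proj T (0, QA x)"
    using linear_diff[OF linear_proj[OF T_csubspace T_closed]]
      proj_id[OF T_csubspace graph_T_from_S[OF assms]] by metis
  then show ?thesis
    using proj_id[OF S_csubspace assms] by simp
qed

lemma QA_decomposition:
  assumes "(y, g) \<in> T"
  shows "QA x = op_fun T y + ((QA x - g) - proj S0 (QA x - g))"
  using op_fun_T_eq[OF assms] proj_S0_QA[of x] by (simp add: linear_diff[OF linear_proj_S0])

lemma rel_compact_QA:
  assumes cp: "compact_perturbation T S" and T_bounded: "\<And>x. x \<in> Dom S \<Longrightarrow> norm (op_fun T x) \<le> K * norm x"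
  shows "rel_compact QA (op_fun S) (Dom S)"
proof (rule rel_compactI)
  fix x :: "nat \<Rightarrow> 'a" and c
  assume x: "\<And>n. x n \<in> Dom S" and bound: "\<And>n. norm (x n) + norm (op_fun S (x n)) \<le> c"
  define p where "p n = (x n, op_fun S (x n))" for n
  have p_S: "p n \<in> S" for n
    using op_fun_in[OF S_subspace S_closed x] by (simp add: p_def)
  have "norm (p n) \<le> c" for n
    using norm_Pair_le[of "x n" "op_fun S (x n)"] bound[of n] by (simp add: p_def)
  then have "has_convergent_subseq (\<lambda>n. proj T (p n) - proj S (p n))"
    using cp by (intro compact_operatorD) (simp_all add: compact_perturbation_def proj2_eq_proj)
  then obtain r l where r: "strict_mono r" and l: "(\<lambda>n. proj T (p (r n)) - proj S (p (r n))) \<longlonglongrightarrow> l"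
    by (rule has_convergent_subseqE)
  define y where "y n = fst (proj T (0, QA (x n)))" for n
  define g where "g n = snd (proj T (0, QA (x n)))" for n
  have yg_T: "(y n, g n) \<in> T" for n
    using proj_in[OF T_csubspace T_closed] by (simp add: y_def g_def)
  have diff_eq: "proj T (p n) - proj S (p n) = (- y n, QA (x n) - g n)" for n
    using proj_T_minus_proj_S_on_S[OF p_S[of n, unfolded p_def]]
    by (simp add: p_def y_def g_def prod_eq_iff)
  have "(\<lambda>n. - y (r n)) \<longlonglongrightarrow> fst l"
    using tendsto_fst[OF l] by (simp add: diff_eq)
  then have "Cauchy (\<lambda>n. y (r n))"
    using LIMSEQ_imp_Cauchy tendsto_minus by fastforce
  moreover have "norm (op_fun T (y (r m)) - op_fun T (y (r n))) \<le> K * norm (y (r m) - y (r n))" for m n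
    using T_bounded[OF Dom_diff[OF S_subspace]] graph_S_from_T(1)[OF yg_T]
      op_fun_diff[OF T_subspace T_closed] dom_eq by metis
  ultimately obtain t where t: "(\<lambda>n. op_fun T (y (r n))) \<longlonglongrightarrow> t"
    using Cauchy_image_lipschitz[where F = "op_fun T"] by (metis Cauchy_convergent_iff convergent_def)
  have h: "(\<lambda>n. QA (x (r n)) - g (r n)) \<longlonglongrightarrow> snd l"
    using tendsto_snd[OF l] by (simp add: diff_eq)
  have "(\<lambda>n. op_fun T (y (r n)) + ((QA (x (r n)) - g (r n)) - proj S0 (QA (x (r n)) - g (r n))))
      \<longlonglongrightarrow> t + (snd l - proj S0 (snd l))"
    by (intro tendsto_add t tendsto_diff h bounded_linear.tendsto[OF bounded_linear_proj[OF S0_subspace S0_closed]])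
  then have "(\<lambda>n. QA (x (r n))) \<longlonglongrightarrow> t + (snd l - proj S0 (snd l))"
    by (simp flip: QA_decomposition[OF yg_T])
  with r show "has_convergent_subseq (\<lambda>n. QA (x n))"
    by (rule has_convergent_subseqI)
qed

lemma compact_QA_resolvent:
  assumes QA_compact: "rel_compact QA (op_fun S) (Dom S)"
    and Res_bounded: "\<And>u. norm (Res u) \<le> K * norm u"
    and Res_S: "\<And>u. (Res u, scaleC lam (Res u) - u) \<in> S"
  shows "compact_operator (\<lambda>u. QA (Res u))"
proof (rule compact_operatorI)
  fix s :: "nat \<Rightarrow> 'a" and c
  assume s: "\<And>n. norm (s n) \<le> c"
  have Res_Dom: "Res (s n) \<in> Dom S" for n
    using Res_S by (auto simp: Dom_def)
  have norm_Res: "norm (Res (s n)) \<le> \<bar>K\<bar> * c" for n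
  proof -
    have "norm (Res (s n)) \<le> \<bar>K\<bar> * norm (s n)"
      using Res_bounded[of "s n"] by (smt (verit) mult_right_mono norm_ge_zero)
    also have "\<dots> \<le> \<bar>K\<bar> * c"
      using s[of n] by (simp add: mult_left_mono)
    finally show ?thesis .
  qed
  have "norm (op_fun S (Res (s n))) \<le> norm (scaleC lam (Res (s n)) - s n)" for n
    using Res_S by (rule norm_op_fun_le[OF S_subspace S_closed])
  also have "\<dots> n \<le> cmod lam * (\<bar>K\<bar> * c) + c" for n
    using norm_triangle_ineq4[of "scaleC lam (Res (s n))" "s n"] norm_Res[of n] s[of n]
    by (smt (verit) mult_left_mono norm_ge_zero norm_scaleC)
  finally have "norm (Res (s n)) + norm (op_fun S (Res (s n))) \<le> \<bar>K\<bar> * c + (cmod lam * (\<bar>K\<bar> * c) + c)"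
    for n using norm_Res[of n] by (meson add_mono)
  then show "has_convergent_subseq (\<lambda>n. QA (Res (s n)))"
    by (rule rel_compactD[OF QA_compact Res_Dom])
qed

lemma linear_QA_resolvent:
  assumes "clinear_map Res" and "\<And>u. Res u \<in> Dom S"
  shows "linear (\<lambda>u. QA (Res u))"
proof (rule linearI)
  have "linear Res"
    using assms(1) by (rule linear_clinear_map)
  then show "QA (Res (u + v)) = QA (Res u) + QA (Res v)" for u v
    by (simp add: linear_add QA_add assms(2))
  show "QA (Res (r *\<^sub>R u)) = r *\<^sub>R QA (Res u)" for r u
    using \<open>linear Res\<close> by (simp add: linear_scale QA_scaleR assms(2))
qed

text \<open>\<open>1\<close> is not an eigenvalue of \<open>QA (\<lambda> - S)\<^sup>-\<^sup>1\<close>, because \<open>\<lambda> - T\<close> is injective.\<close>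
lemma QA_resolvent_fixed_point:
  assumes Res_S: "\<And>u. (Res u, scaleC lam (Res u) - u) \<in> S"
    and Res_T: "clinear_map Res_T" "\<And>x f. (x, f) \<in> T \<Longrightarrow> Res_T (scaleC lam x - f) = x"
    and fixed: "QA (Res y) = y"
  shows "y = 0"
proof -
  have "(Res y, scaleC lam (Res y) - y + QA (Res y)) \<in> T"
    using Res_S by (rule graph_T_from_S)
  then have "Res_T (scaleC lam (Res y) - scaleC lam (Res y)) = Res y"
    unfolding fixed by (intro Res_T(2)) simp
  then have "Res_T 0 = Res y"
    by simp
  then have "Res y = 0"
    using clinear_map_zero[OF Res_T(1)] by simp
  then show ?thesis
    using fixed QA_zero by simp
qed

lemma QA_fst_has_convergent_subseq:
  assumes QA_compact: "rel_compact QA (op_fun S) (Dom S)"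
    and lam: "lam \<in> resolvent_set T" "lam \<in> resolvent_set S"
    and s: "\<And>n. s n \<in> T" "\<And>n. norm (s n) \<le> c"
  shows "has_convergent_subseq (\<lambda>n. QA (fst (s n)))"
proof -
  obtain Res where Res: "clinear_map Res" "\<exists>K. \<forall>x. norm (Res x) \<le> K * norm x"
    and Res_inv: "\<And>x f. (x, f) \<in> S \<Longrightarrow> Res (scaleC lam x - f) = x"
    and Res_S: "\<And>u. (Res u, scaleC lam (Res u) - u) \<in> S"
    by (rule resolvent_setE[OF lam(2)]) (rule that)
  obtain Res_T where Res_T: "clinear_map Res_T" "\<And>x f. (x, f) \<in> T \<Longrightarrow> Res_T (scaleC lam x - f) = x"
    by (rule resolvent_setE[OF lam(1)]) (rule that)
  have Res_Dom: "Res u \<in> Dom S" for u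
    using Res_S by (auto simp: Dom_def)
  define V where "V u = QA (Res u)" for u
  define x where "x n = fst (s n)" for n
  define a where "a n = scaleC lam (x n) - snd (s n)" for n
  \<comment> \<open>\<open>(x\<^sub>n, f\<^sub>n - QA x\<^sub>n) \<in> S\<close> gives \<open>x\<^sub>n = (\<lambda> - S)\<^sup>-\<^sup>1 (a\<^sub>n + QA x\<^sub>n)\<close>\<close>
  define w where "w n = QA (x n)" for n
  have x_eq: "x n = Res (a n + w n)" for n
    using Res_inv[OF graph_S_from_T(2)[of "x n" "snd (s n)"]] s(1)[of n]
    by (simp add: a_def x_def w_def algebra_simps)
  have w_eq: "w n = V (a n) + V (w n)" for n
  proof -
    have "x n = Res (a n) + Res (w n)"
      using Res(1) x_eq[of n] by (simp add: clinear_map_def)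
    have "w n = QA (x n)"
      by (simp add: w_def)
    also have "\<dots> = QA (Res (a n) + Res (w n))"
      using \<open>x n = Res (a n) + Res (w n)\<close> by (rule arg_cong)
    also have "\<dots> = V (a n) + V (w n)"
      unfolding V_def by (rule QA_add[OF Res_Dom Res_Dom])
    finally show ?thesis .
  qed
  have a_bound: "norm (a n) \<le> cmod lam * c + c" for n
  proof -
    have "norm (x n) \<le> c" "norm (snd (s n)) \<le> c"
      using s(2)[of n] norm_fst_le[of "fst (s n)" "snd (s n)"] norm_snd_le[of "snd (s n)" "fst (s n)"]
      by (simp_all add: x_def)
    then show ?thesis
      using norm_triangle_ineq4[of "scaleC lam (x n)" "snd (s n)"]
      by (smt (verit) a_def mult_left_mono norm_ge_zero norm_scaleC)
  qed
  obtain K where K: "\<And>u. norm (Res u) \<le> K * norm u"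
    using Res(2) by blast
  have "compact_operator V"
    unfolding V_def using QA_compact K Res_S by (rule compact_QA_resolvent)
  moreover have "linear V"
    unfolding V_def using Res(1) Res_Dom by (rule linear_QA_resolvent)
  moreover have "V y = y \<Longrightarrow> y = 0" for y
    unfolding V_def using Res_S Res_T by (rule QA_resolvent_fixed_point)
  ultimately have "has_convergent_subseq w"
    using w_eq a_bound by (rule compact_operator_solution_has_convergent_subseq)
  moreover have "w = (\<lambda>n. QA (fst (s n)))"
    by (simp add: fun_eq_iff w_def x_def)
  ultimately show ?thesis
    by simp
qed

lemma proj_S_minus_proj_T_on_T:
  assumes "(x, f) \<in> T"
  shows "proj T (x, f) - proj S (x, f) = (0, QA x) - proj S (0, QA x)"
proof -
  have "(x, f) = (x, f - QA x) + (0, QA x)"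
    by simp
  then have "proj S (x, f) = (x, f - QA x) + proj S (0, QA x)"
    using linear_add[OF linear_proj[OF S_csubspace S_closed]]
      proj_id[OF S_csubspace graph_S_from_T(2)[OF assms]] by metis
  then show ?thesis
    using proj_id[OF T_csubspace assms] by simp
qed

lemma compact_proj_S_minus_proj_T:
  assumes QA_compact: "rel_compact QA (op_fun S) (Dom S)"
  shows "compact_operator (\<lambda>p. proj S p - proj T (proj S p))"
proof (rule compact_operatorI)
  fix s :: "nat \<Rightarrow> 'a \<times> 'a" and c
  assume s: "\<And>n. norm (s n) \<le> c"
  define x where "x n = fst (proj S (s n))" for n
  define f where "f n = snd (proj S (s n))" for n
  have xf_S: "(x n, f n) \<in> S" for n
    using proj_in[OF S_csubspace S_closed] by (simp add: x_def f_def)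
  have norm_xf: "norm (x n, f n) \<le> c" for n
    using norm_proj_le[OF S_csubspace S_closed, of "s n"] s[of n] by (simp add: x_def f_def)
  have diff_eq: "proj S (s n) - proj T (proj S (s n)) = proj T (0, QA (x n)) - (0, QA (x n))" for n
    using proj_T_minus_proj_S_on_S[OF xf_S[of n]] proj_id[OF S_csubspace xf_S[of n]]
    by (simp add: x_def f_def algebra_simps)
  have "norm (x n) + norm (op_fun S (x n)) \<le> c + c" for n
    using norm_fst_le[of "x n" "f n"] norm_snd_le[of "f n" "x n"] norm_xf[of n]
      norm_op_fun_le[OF S_subspace S_closed xf_S[of n]] by linarith
  then have "has_convergent_subseq (\<lambda>n. QA (x n))"
    using QA_compact by (rule rel_compactD[rotated 2]) (use xf_S in \<open>auto simp: Dom_def\<close>)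
  then obtain r l where r: "strict_mono r" and l: "(\<lambda>n. QA (x (r n))) \<longlonglongrightarrow> l"
    by (rule has_convergent_subseqE)
  have "(\<lambda>n. proj T (0, QA (x (r n))) - (0, QA (x (r n)))) \<longlonglongrightarrow> proj T (0, l) - (0, l)"
    by (intro tendsto_intros l bounded_linear.tendsto[OF bounded_linear_proj[OF T_csubspace T_closed]])
  with r show "has_convergent_subseq (\<lambda>n. proj S (s n) - proj T (proj S (s n)))"
    unfolding diff_eq by (rule has_convergent_subseqI)
qed

lemma compact_proj_T_minus_proj_S:
  assumes QA_compact: "rel_compact QA (op_fun S) (Dom S)"
    and lam: "lam \<in> resolvent_set T" "lam \<in> resolvent_set S"
  shows "compact_operator (\<lambda>p. proj T p - proj S (proj T p))"
proof (rule compact_operatorI)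
  fix s :: "nat \<Rightarrow> 'a \<times> 'a" and c
  assume s: "\<And>n. norm (s n) \<le> c"
  have "proj T (s n) \<in> T" "norm (proj T (s n)) \<le> c" for n
    using proj_in[OF T_csubspace T_closed] norm_proj_le[OF T_csubspace T_closed, of "s n"] s[of n]
    by auto
  then have "has_convergent_subseq (\<lambda>n. QA (fst (proj T (s n))))"
    using QA_compact lam by (intro QA_fst_has_convergent_subseq)
  then obtain r l where r: "strict_mono r" and l: "(\<lambda>n. QA (fst (proj T (s (r n))))) \<longlonglongrightarrow> l"
    by (rule has_convergent_subseqE)
  have diff_eq: "proj T (s n) - proj S (proj T (s n))
      = (0, QA (fst (proj T (s n)))) - proj S (0, QA (fst (proj T (s n))))" for n
    using proj_S_minus_proj_T_on_T[of "fst (proj T (s n))" "snd (proj T (s n))"]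
      proj_id[OF T_csubspace proj_in[OF T_csubspace T_closed]] proj_in[OF T_csubspace T_closed]
    by simp
  have "(\<lambda>n. (0, QA (fst (proj T (s (r n))))) - proj S (0, QA (fst (proj T (s (r n))))))
      \<longlonglongrightarrow> (0, l) - proj S (0, l)"
    by (intro tendsto_intros l bounded_linear.tendsto[OF bounded_linear_proj[OF S_csubspace S_closed]])
  with r show "has_convergent_subseq (\<lambda>n. proj T (s n) - proj S (proj T (s n)))"
    unfolding diff_eq by (rule has_convergent_subseqI)
qed

text \<open>\<open>P\<^sub>T - P\<^sub>S = (I - P\<^sub>S) P\<^sub>T - P\<^sub>S (I - P\<^sub>T)\<close>, and \<open>P\<^sub>S (I - P\<^sub>T)\<close> is the adjoint of
  \<open>(I - P\<^sub>T) P\<^sub>S\<close>.\<close>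
lemma compact_perturbation_if_rel_compact_QA:
  assumes QA_compact: "rel_compact QA (op_fun S) (Dom S)"
    and rho: "resolvent_set T \<inter> resolvent_set S \<noteq> {}"
  shows "compact_perturbation T S"
proof -
  obtain lam where lam: "lam \<in> resolvent_set T" "lam \<in> resolvent_set S"
    using rho by blast
  have "compact_operator (\<lambda>q. proj S (q - proj T q))"
  proof (rule compact_operator_adjoint)
    show "compact_operator (\<lambda>p. proj S p - proj T (proj S p))"
      using QA_compact by (rule compact_proj_S_minus_proj_T)
    show "cinner (proj S p - proj T (proj S p)) q = cinner p (proj S (q - proj T q))" for p q
      using S_csubspace S_closed T_csubspace T_closed by (rule cinner_proj_minus_proj_comp)
    show "norm (proj S (q - proj T q)) \<le> 1 * norm q" for q
      using norm_proj_le[OF S_csubspace S_closed, of "q - proj T q"]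
        norm_minus_proj_le[OF T_csubspace T_closed, of q] by simp
  qed
  with compact_proj_T_minus_proj_S[OF QA_compact lam]
  have "compact_operator (\<lambda>p. (proj T p - proj S (proj T p)) - proj S (p - proj T p))"
    by (rule compact_operator_diff)
  moreover have "(proj T p - proj S (proj T p)) - proj S (p - proj T p) = proj T p - proj S p" for p
    by (simp add: linear_diff[OF linear_proj[OF S_csubspace S_closed]])
  ultimately show ?thesis
    by (simp add: compact_perturbation_def proj2_eq_proj)
qed

end

theorem theorem3p5:
  fixes T S A :: "('a::chilbert_space \<times> 'a) set"
  assumes T_closed: "closed T" and T_herm: "hermitian T"
    and A_closed: "closed A" and A_herm: "hermitian A"
    and S_sa: "self_adjoint S"
    and dom_eq: "Dom T = Dom S" and dom_sub: "Dom S \<subseteq> Dom A"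
    and T_sum: "T = relsum S A"
    and rho: "resolvent_set T \<inter> resolvent_set S \<noteq> {}"
  shows "(rel_compact (\<lambda>x. proj (ortho (relapp S 0)) (op_fun A x)) (op_fun S) (Dom S)
            \<longrightarrow> compact_perturbation T S)
       \<and> (compact_perturbation T S \<and> (\<exists>K. \<forall>x\<in>Dom S. norm (op_fun T x) \<le> K * norm x)
            \<longrightarrow> rel_compact (\<lambda>x. proj (ortho (relapp S 0)) (op_fun A x)) (op_fun S) (Dom S))"
proof -
  interpret self_adjoint_sum T S A
    using assms by unfold_locales (simp_all add: hermitian_def)
  have QA: "(\<lambda>x. proj (ortho (relapp S 0)) (op_fun A x)) = QA"
    by (simp add: fun_eq_iff QA_def)
  show ?thesis
    unfolding QA using compact_perturbation_if_rel_compact_QA[OF _ rho] rel_compact_QA by blast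
qed

end
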